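(* Let $\mathcal{O}$ be an oriented matroid on $E$, let $f,g,h\in E$ be pairwise distinct, and let $X,Y$ be comodular cocircuits with $X_g=Y_g\neq 0$ and $X_f=Y_f\neq 0$. If $X\leftrightarrow_{g,f}Y$, then $X\to_{g,h}Y$ implies $X\to_{f,h}Y$.
   Context: Oriented matroid $\mathcal{O}$ of rank $r$ on finite $E$, given by its cocircuits (sign vectors in $\{+,-,0\}^E$). Notation: $z(X)$ zero set, $\operatorname{sep}(X,Y)=\{e:X_e=-Y_e\neq 0\}$, composition $(X\circ Y)_e=X_e$ if $X_e\ne0$, else $Y_e$. An edge is a covector whose zero set is a flat of rank $r-2$; cocircuits $X\neq\pm Y$ are comodular if $X\circ Y$ is an edge. For comodular $X,Y$ and $e\in\operatorname{sep}(X,Y)$, cocircuit elimination of $e$ between $X$ and $Y$ yields the unique cocircuit $Z$ with $Z_e=0$ and $Z_h=(X\circ Y)_h$ for $h\notin\operatorname{sep}(X,Y)$. For distinct $a,b\in E$ and comodular $X,Y$ with $X_a=Y_a\ne0$, let $Z$ be obtained by eliminating $a$ between $-X$ and $Y$; write $X\to_{a,b}Y$ if $Z_b=+$, $X\leftarrow_{a,b}Y$ if $Z_b=-$, $X\leftrightarrow_{a,b}Y$ if $Z_b=0$. *)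

theory Defs
  imports Main
begin

(* Signs and sign vectors.  A sign vector on the ground set E is a function
   'a => sign that vanishes outside E. *)
datatype sign = SPos | SNeg | SZero

fun sneg :: "sign \<Rightarrow> sign" where
  "sneg SPos = SNeg" | "sneg SNeg = SPos" | "sneg SZero = SZero"

type_synonym 'a svec = "'a \<Rightarrow> sign"

definition vneg :: "'a svec \<Rightarrow> 'a svec" where
  "vneg X = (\<lambda>e. sneg (X e))"

definition zvec :: "'a svec" where
  "zvec = (\<lambda>e. SZero)"

definition supp :: "'a svec \<Rightarrow> 'a set" where
  "supp X = {e. X e \<noteq> SZero}"

definition posp :: "'a svec \<Rightarrow> 'a set" where
  "posp X = {e. X e = SPos}"

definition negp :: "'a svec \<Rightarrow> 'a set" where
  "negp X = {e. X e = SNeg}"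

definition zero_set :: "'a set \<Rightarrow> 'a svec \<Rightarrow> 'a set" where
  "zero_set E X = {e \<in> E. X e = SZero}"

definition sep :: "'a svec \<Rightarrow> 'a svec \<Rightarrow> 'a set" where
  "sep X Y = {e. X e \<noteq> SZero \<and> X e = sneg (Y e)}"

definition comp :: "'a svec \<Rightarrow> 'a svec \<Rightarrow> 'a svec" where
  "comp X Y = (\<lambda>e. if X e \<noteq> SZero then X e else Y e)"

(* Cocircuit axioms of an oriented matroid on the finite set E
   (Bjorner-Las Vergnas-Sturmfels-White-Ziegler, Def. 3.2.1 dualised). *)
definition om_cocircuits :: "'a set \<Rightarrow> 'a svec set \<Rightarrow> bool" where
  "om_cocircuits E C \<longleftrightarrow>
     finite E \<and>
     (\<forall>X\<in>C. \<forall>e. e \<notin> E \<longrightarrow> X e = SZero) \<and>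
     zvec \<notin> C \<and>
     (\<forall>X\<in>C. vneg X \<in> C) \<and>
     (\<forall>X\<in>C. \<forall>Y\<in>C. supp X \<subseteq> supp Y \<longrightarrow> X = Y \<or> X = vneg Y) \<and>
     (\<forall>X\<in>C. \<forall>Y\<in>C. \<forall>e. X \<noteq> vneg Y \<and> e \<in> sep X Y \<longrightarrow>
        (\<exists>Z\<in>C. Z e = SZero \<and> posp Z \<subseteq> posp X \<union> posp Y
                 \<and> negp Z \<subseteq> negp X \<union> negp Y))"

inductive_set covectors :: "'a svec set \<Rightarrow> 'a svec set" for C where
  cov_zero: "zvec \<in> covectors C"
| cov_comp: "X \<in> C \<Longrightarrow> Y \<in> covectors C \<Longrightarrow> comp X Y \<in> covectors C"

(* Underlying matroid M: its cocircuits are the supports of the signed cocircuits.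
   Independent sets of the dual M^* are the sets containing no cocircuit support;
   rank of M^*, then rank of M via r(A) = |A| + r^*(E - A) - r^*(E). *)
definition coindep :: "'a svec set \<Rightarrow> 'a set \<Rightarrow> bool" where
  "coindep C B \<longleftrightarrow> \<not> (\<exists>X\<in>C. supp X \<subseteq> B)"

definition dual_rank :: "'a svec set \<Rightarrow> 'a set \<Rightarrow> nat" where
  "dual_rank C A = Max {card B | B. B \<subseteq> A \<and> coindep C B}"

definition mrank :: "'a set \<Rightarrow> 'a svec set \<Rightarrow> 'a set \<Rightarrow> nat" where
  "mrank E C A = card A + dual_rank C (E - A) - dual_rank C E"

definition om_rank :: "'a set \<Rightarrow> 'a svec set \<Rightarrow> nat" where
  "om_rank E C = mrank E C E"

definition is_edge :: "'a set \<Rightarrow> 'a svec set \<Rightarrow> 'a svec \<Rightarrow> bool" where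
  "is_edge E C W \<longleftrightarrow> W \<in> covectors C \<and> mrank E C (zero_set E W) + 2 = om_rank E C"

definition comodular :: "'a set \<Rightarrow> 'a svec set \<Rightarrow> 'a svec \<Rightarrow> 'a svec \<Rightarrow> bool" where
  "comodular E C X Y \<longleftrightarrow> X \<in> C \<and> Y \<in> C \<and> X \<noteq> Y \<and> X \<noteq> vneg Y \<and> is_edge E C (comp X Y)"

definition elim :: "'a svec set \<Rightarrow> 'a svec \<Rightarrow> 'a svec \<Rightarrow> 'a \<Rightarrow> 'a svec" where
  "elim C X Y e = (THE Z. Z \<in> C \<and> Z e = SZero \<and> (\<forall>h. h \<notin> sep X Y \<longrightarrow> Z h = comp X Y h))"

definition arrow_setting :: "'a set \<Rightarrow> 'a svec set \<Rightarrow> 'a \<Rightarrow> 'a \<Rightarrow> 'a svec \<Rightarrow> 'a svec \<Rightarrow> bool" where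
  "arrow_setting E C a b X Y \<longleftrightarrow> a \<in> E \<and> b \<in> E \<and> a \<noteq> b \<and> comodular E C X Y
      \<and> X a = Y a \<and> X a \<noteq> SZero"

definition arr_right :: "'a set \<Rightarrow> 'a svec set \<Rightarrow> 'a \<Rightarrow> 'a \<Rightarrow> 'a svec \<Rightarrow> 'a svec \<Rightarrow> bool" where
  "arr_right E C a b X Y \<longleftrightarrow> arrow_setting E C a b X Y \<and> elim C (vneg X) Y a b = SPos"

definition arr_left :: "'a set \<Rightarrow> 'a svec set \<Rightarrow> 'a \<Rightarrow> 'a \<Rightarrow> 'a svec \<Rightarrow> 'a svec \<Rightarrow> bool" where
  "arr_left E C a b X Y \<longleftrightarrow> arrow_setting E C a b X Y \<and> elim C (vneg X) Y a b = SNeg"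

definition arr_both :: "'a set \<Rightarrow> 'a svec set \<Rightarrow> 'a \<Rightarrow> 'a \<Rightarrow> 'a svec \<Rightarrow> 'a svec \<Rightarrow> bool" where
  "arr_both E C a b X Y \<longleftrightarrow> arrow_setting E C a b X Y \<and> elim C (vneg X) Y a b = SZero"

end

(*
  The elimination of e between comodular cocircuits X, Y is unique.  Because X \<circ> Y is an edge,
  supp X \<union> supp Y has nullity at most two in the dual matroid, and in such a set two different
  cocircuit supports cannot both avoid an element of a third one.  This forces the conformal
  cocircuit provided by the elimination axiom to agree with X \<circ> Y off sep(X, Y), and determines
  it up to sign; a coordinate outside sep(X, Y) where X \<circ> Y is nonzero fixes the sign.
  Hence if eliminating g between -X and Y gives Z with Z_f = 0, then Z is also the elimination
  of f, and both arrow relations read off the same value Z_h.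
*)

theory Submission imports Defs begin

lemma sneg_sneg [simp]: "sneg (sneg s) = s"
  by (cases s) auto

lemma sneg_eq_SZero_iff [simp]: "sneg s = SZero \<longleftrightarrow> s = SZero"
  by (cases s) auto

lemma sneg_eq_self_iff: "sneg s = s \<longleftrightarrow> s = SZero"
  by (cases s) auto

lemma vneg_apply [simp]: "vneg X e = sneg (X e)"
  by (simp add: vneg_def)

lemma vneg_vneg [simp]: "vneg (vneg X) = X"
  by (simp add: vneg_def)

lemma vneg_inject [simp]: "vneg X = vneg Y \<longleftrightarrow> X = Y"
  by (metis vneg_vneg)

lemma supp_vneg [simp]: "supp (vneg X) = supp X"
  by (simp add: supp_def)

lemma supp_comp: "supp (comp X Y) = supp X \<union> supp Y"
  by (auto simp: supp_def comp_def)

lemma conformal_supp_subset: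
  assumes "\<And>k. Z k \<noteq> SZero \<Longrightarrow> Z k = X k \<or> Z k = Y k"
  shows "supp Z \<subseteq> supp X \<union> supp Y"
  using assms by (force simp: supp_def)

lemma conformal_both_signs_supp_subset:
  assumes "\<And>k. Z k \<noteq> SZero \<Longrightarrow> Z k = X k \<or> Z k = Y k"
    and "\<And>k. Z k \<noteq> SZero \<Longrightarrow> Z k = sneg (X k) \<or> Z k = Y k"
  shows "supp Z \<subseteq> supp Y"
  using assms by (fastforce simp: supp_def sneg_eq_self_iff)

lemma coindep_subset: "coindep C B \<Longrightarrow> A \<subseteq> B \<Longrightarrow> coindep C A"
  by (auto simp: coindep_def)

text \<open>Supports of signed cocircuits are the circuits of the dual matroid, whose independent sets
  are the coindependent sets.\<close>

definition dual_nullity_le_two :: "'a svec set \<Rightarrow> 'a set \<Rightarrow> bool" where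
  "dual_nullity_le_two C D \<longleftrightarrow> (\<exists>B\<subseteq>D. coindep C B \<and> card D \<le> card B + 2)"

definition is_elimination :: "'a svec set \<Rightarrow> 'a svec \<Rightarrow> 'a svec \<Rightarrow> 'a \<Rightarrow> 'a svec \<Rightarrow> bool" where
  "is_elimination C X Y e Z \<longleftrightarrow>
     Z \<in> C \<and> Z e = SZero \<and> (\<forall>h. h \<notin> sep X Y \<longrightarrow> Z h = comp X Y h)"

lemma elim_eq_The_is_elimination: "elim C X Y e = (THE Z. is_elimination C X Y e Z)"
  by (simp add: elim_def is_elimination_def)

lemma is_elimination_supp:
  assumes "is_elimination C X Y e Z"
  shows "supp Z \<subseteq> supp X \<union> supp Y"
proof
  fix k assume "k \<in> supp Z"
  then show "k \<in> supp X \<union> supp Y"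
    using assms supp_comp[of X Y] by (cases "k \<in> sep X Y") (auto simp: is_elimination_def sep_def supp_def)
qed

context
  fixes E :: "'a set" and C :: "'a svec set"
  assumes om: "om_cocircuits E C"
begin

lemma finite_ground: "finite E"
  using om by (simp add: om_cocircuits_def)

lemma supp_cocircuit_subset_ground: "X \<in> C \<Longrightarrow> supp X \<subseteq> E"
  using om by (auto simp: om_cocircuits_def supp_def)

lemma finite_supp_cocircuit: "X \<in> C \<Longrightarrow> finite (supp X)"
  using supp_cocircuit_subset_ground finite_ground finite_subset by blast

lemma vneg_cocircuit: "X \<in> C \<Longrightarrow> vneg X \<in> C"
  using om by (simp add: om_cocircuits_def)

lemma cocircuit_supp_subset_eq:
  "X \<in> C \<Longrightarrow> Y \<in> C \<Longrightarrow> supp X \<subseteq> supp Y \<Longrightarrow> X = Y \<or> X = vneg Y"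
  using om by (simp add: om_cocircuits_def)

lemma coindep_empty: "coindep C {}"
proof -
  have "Z = zvec" if "supp Z \<subseteq> {}" for Z
    using that by (auto simp: supp_def zvec_def)
  then show ?thesis
    using om by (auto simp: coindep_def om_cocircuits_def)
qed

lemma cocircuit_elim_conformal:
  assumes "X \<in> C" "Y \<in> C" "X \<noteq> vneg Y" "e \<in> sep X Y"
  obtains Z where "Z \<in> C" "Z e = SZero" "\<And>k. Z k \<noteq> SZero \<Longrightarrow> Z k = X k \<or> Z k = Y k"
proof -
  obtain Z where Z: "Z \<in> C" "Z e = SZero"
    and pos: "posp Z \<subseteq> posp X \<union> posp Y" and neg: "negp Z \<subseteq> negp X \<union> negp Y"
    using om assms unfolding om_cocircuits_def by blast
  have "Z k = X k \<or> Z k = Y k" if nz: "Z k \<noteq> SZero" for k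
    using nz pos neg by (cases "Z k") (auto simp: posp_def negp_def)
  with Z that show ?thesis by blast
qed

lemma cocircuit_supp_elim:
  assumes Z1: "Z1 \<in> C" and Z2: "Z2 \<in> C" and ne: "supp Z1 \<noteq> supp Z2"
    and x: "x \<in> supp Z1" "x \<in> supp Z2"
  obtains Z where "Z \<in> C" "supp Z \<subseteq> supp Z1 \<union> supp Z2 - {x}"
proof -
  \<comment> \<open>Eliminate \<open>x\<close> between \<open>Z1\<close> and whichever of \<open>Z2\<close>, \<open>-Z2\<close> has the opposite sign at \<open>x\<close>.\<close>
  have "\<exists>Z2'\<in>{Z2, vneg Z2}. x \<in> sep Z1 Z2'"
    using x by (cases "Z1 x"; cases "Z2 x") (auto simp: sep_def supp_def)
  then obtain Z2' where Z2': "Z2' \<in> {Z2, vneg Z2}" "x \<in> sep Z1 Z2'"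
    by blast
  have Z2'_props: "Z2' \<in> C" "Z1 \<noteq> vneg Z2'" "supp Z2' = supp Z2"
    using Z2' Z2 ne vneg_cocircuit by auto
  obtain Z where Z: "Z \<in> C" "Z x = SZero" "\<And>k. Z k \<noteq> SZero \<Longrightarrow> Z k = Z1 k \<or> Z k = Z2' k"
    using cocircuit_elim_conformal[OF Z1 Z2'_props(1,2) Z2'(2)] by blast
  have "supp Z \<subseteq> supp Z1 \<union> supp Z2 - {x}"
    using conformal_supp_subset[of Z Z1 Z2', OF Z(3)] Z(2) \<open>supp Z2' = supp Z2\<close> by (auto simp: supp_def)
  with Z(1) that show ?thesis by blast
qed

lemma coindep_insert_cocircuits_supp_eq:
  assumes I: "coindep C I" and Z: "Z1 \<in> C" "Z2 \<in> C"
    and sub: "supp Z1 \<subseteq> insert e I" "supp Z2 \<subseteq> insert e I"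
  shows "supp Z1 = supp Z2"
proof (rule ccontr)
  assume ne: "supp Z1 \<noteq> supp Z2"
  have "e \<in> supp Z1" "e \<in> supp Z2"
    using I Z sub unfolding coindep_def by auto
  then obtain Z where "Z \<in> C" "supp Z \<subseteq> supp Z1 \<union> supp Z2 - {e}"
    using cocircuit_supp_elim[OF Z ne] by blast
  with I sub show False
    unfolding coindep_def by blast
qed

lemma coindep_subset_if_exchanges_dependent:
  assumes I: "coindep C I" and J: "coindep C J" and e: "e \<in> J" "e \<notin> I"
    and exchange: "\<And>d. d \<in> I \<Longrightarrow> d \<notin> J \<Longrightarrow> \<not> coindep C (insert e (I - {d}))"
  shows "I \<subseteq> J"
proof (rule ccontr)
  assume "\<not> I \<subseteq> J"
  then obtain f where f: "f \<in> I" "f \<notin> J"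
    by blast
  obtain Zf where Zf: "Zf \<in> C" "supp Zf \<subseteq> insert e (I - {f})"
    using exchange[OF f] unfolding coindep_def by blast
  have "\<not> supp Zf \<subseteq> J"
    using J Zf(1) by (auto simp: coindep_def)
  then obtain g where g: "g \<in> supp Zf" "g \<notin> J"
    by blast
  then have "g \<in> I"
    using Zf(2) e(1) by auto
  then obtain Zg where Zg: "Zg \<in> C" "supp Zg \<subseteq> insert e (I - {g})"
    using exchange g(2) unfolding coindep_def by blast
  have "supp Zf = supp Zg"
    using coindep_insert_cocircuits_supp_eq[OF I Zf(1) Zg(1)] Zf(2) Zg(2) by blast
  with g Zg(2) e(1) show False
    by blast
qed

lemma coindep_augment:
  assumes fin: "finite I1" "finite I2" and indep: "coindep C I1" "coindep C I2"
    and less: "card I1 < card I2"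
  shows "\<exists>e\<in>I2 - I1. coindep C (insert e I1)"
proof (rule ccontr)
  assume no_aug: "\<not> ?thesis"
  define Q where "Q I \<longleftrightarrow> I \<subseteq> I1 \<union> I2 \<and> coindep C I \<and> card I1 < card I" for I
  have "Q I2"
    using indep less by (auto simp: Q_def)
  then obtain I3 where "Q I3" and min: "\<And>I. Q I \<Longrightarrow> card (I1 - I3) \<le> card (I1 - I)"
    using ex_has_least_nat[of Q I2 "\<lambda>I. card (I1 - I)"] by blast
  then have I3: "I3 \<subseteq> I1 \<union> I2" "coindep C I3" "card I1 < card I3"
    by (auto simp: Q_def)
  have fin3: "finite I3"
    using I3(1) fin finite_subset by blast
  have "\<not> I3 \<subseteq> I1"
    using I3(3) card_mono[OF fin(1), of I3] by linarith
  then obtain f where f: "f \<in> I3" "f \<notin> I1"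
    by blast
  have "\<not> I1 \<subseteq> I3"
  proof
    assume "I1 \<subseteq> I3"
    then have "coindep C (insert f I1)"
      using f coindep_subset[OF I3(2)] by blast
    with f I3(1) no_aug show False
      by blast
  qed
  then obtain e where e: "e \<in> I1" "e \<notin> I3"
    by blast
  have "\<not> coindep C (insert e (I3 - {d}))" if d: "d \<in> I3" "d \<notin> I1" for d
  proof -
    let ?T = "insert e (I3 - {d})"
    have card_T: "card ?T = card I3"
      using fin3 e(2) card.remove[OF fin3 d(1)] by (simp add: card_insert_if)
    have "card (I1 - ?T) < card (I1 - I3)"
    proof -
      have "I1 - ?T = I1 - I3 - {e}"
        using d e by auto
      moreover have "card (I1 - I3 - {e}) < card (I1 - I3)"
        using fin(1) e by (intro card_Diff1_less) auto
      ultimately show ?thesis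
        by simp
    qed
    then have "\<not> Q ?T"
      using min[of ?T] by linarith
    moreover have "?T \<subseteq> I1 \<union> I2"
      using I3(1) e by auto
    ultimately show ?thesis
      using card_T I3(3) unfolding Q_def by argo
  qed
  then have "I3 \<subseteq> I1"
    using coindep_subset_if_exchanges_dependent[OF I3(2) indep(1) e(1,2)] by blast
  with f show False
    by blast
qed

lemma coindep_extend_maximal:
  assumes "finite D" "coindep C I" "I \<subseteq> D"
  obtains J where "I \<subseteq> J" "J \<subseteq> D" "coindep C J" "\<And>x. x \<in> D - J \<Longrightarrow> \<not> coindep C (insert x J)"
proof -
  define P where "P J \<longleftrightarrow> I \<subseteq> J \<and> J \<subseteq> D \<and> coindep C J" for J
  have "P I"
    using assms by (auto simp: P_def)
  then obtain J where PJ: "P J" and max: "\<And>J'. P J' \<Longrightarrow> card D - card J \<le> card D - card J'"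
    using ex_has_least_nat[of P I "\<lambda>J. card D - card J"] by blast
  have "\<not> coindep C (insert x J)" if x: "x \<in> D - J" for x
  proof
    assume "coindep C (insert x J)"
    then have "card D - card J \<le> card D - card (insert x J)"
      using max[of "insert x J"] PJ x by (auto simp: P_def)
    moreover have "card (insert x J) \<le> card D"
      using x PJ assms(1) by (intro card_mono) (auto simp: P_def)
    moreover have "finite J"
      using PJ assms(1) finite_subset by (auto simp: P_def)
    ultimately show False
      using x by auto
  qed
  with PJ that show ?thesis
    by (auto simp: P_def)
qed

lemma maximal_coindep_card_ge:
  assumes "finite D" "J \<subseteq> D" "coindep C J" "\<And>x. x \<in> D - J \<Longrightarrow> \<not> coindep C (insert x J)"
    and "B \<subseteq> D" "coindep C B"
  shows "card B \<le> card J"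
proof (rule ccontr)
  assume "\<not> ?thesis"
  then obtain e where "e \<in> B - J" "coindep C (insert e J)"
    using coindep_augment[of J B] assms finite_subset by (metis not_le)
  with assms show False
    by auto
qed

lemma coindep_card_union_cocircuits:
  assumes Z: "Z1 \<in> C" "Z2 \<in> C" "supp Z1 \<noteq> supp Z2"
    and I: "I \<subseteq> supp Z1 \<union> supp Z2" "coindep C I"
  shows "card I + 2 \<le> card (supp Z1 \<union> supp Z2)"
proof (rule ccontr)
  let ?A = "supp Z1 \<union> supp Z2"
  assume "\<not> ?thesis"
  have finA: "finite ?A"
    using finite_supp_cocircuit Z by auto
  have finI: "finite I"
    using finA I(1) finite_subset by blast
  have "card (?A - I) = card ?A - card I"
    using card_Diff_subset[OF finI I(1)] .
  with \<open>\<not> ?thesis\<close> card_mono[OF finA I(1)] have "card (?A - I) \<le> 1"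
    by linarith
  then have single: "u = v" if "u \<in> ?A - I" "v \<in> ?A - I" for u v
    using that finA card_le_Suc0_iff_eq[of "?A - I"] by auto
  obtain x where x: "x \<in> supp Z1" "x \<notin> I"
    using I Z unfolding coindep_def by blast
  obtain y where y: "y \<in> supp Z2" "y \<notin> I"
    using I Z unfolding coindep_def by blast
  have "x = y"
    using single x y by auto
  then obtain Z3 where "Z3 \<in> C" "supp Z3 \<subseteq> ?A - {x}"
    using cocircuit_supp_elim[OF Z x(1)] y by blast
  moreover have "?A - {x} \<subseteq> I"
    using single x by blast
  ultimately show False
    using I unfolding coindep_def by blast
qed

lemma coindep_inter_cocircuit_supp:
  assumes Z: "Z \<in> C" and "\<not> supp Z \<subseteq> A"
  shows "coindep C (supp Z \<inter> A)"
  unfolding coindep_def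
proof
  assume "\<exists>X\<in>C. supp X \<subseteq> supp Z \<inter> A"
  then obtain X where X: "X \<in> C" "supp X \<subseteq> supp Z \<inter> A"
    by blast
  then have "supp X = supp Z"
    using cocircuit_supp_subset_eq[OF X(1) Z] by auto
  with X(2) assms(2) show False
    by blast
qed

lemma maximal_coindep_extension_inter:
  assumes "I \<subseteq> A" "\<And>x. x \<in> A - I \<Longrightarrow> \<not> coindep C (insert x I)"
    and "I \<subseteq> J" "coindep C J"
  shows "J \<inter> A = I"
proof (rule ccontr)
  assume "J \<inter> A \<noteq> I"
  then obtain x where x: "x \<in> J" "x \<in> A" "x \<notin> I"
    using assms(1,3) by blast
  then have "coindep C (insert x I)"
    using assms(3) coindep_subset[OF assms(4)] by blast
  with assms(2) x show False
    by blast
qed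

text \<open>Two distinct cocircuit supports already have dual nullity two, and a third support through
  an element outside both would raise it to three.\<close>

lemma dual_nullity_le_two_cocircuits_eq:
  assumes finD: "finite D" and D: "dual_nullity_le_two C D"
    and Z: "Z1 \<in> C" "Z2 \<in> C" "Z3 \<in> C" "supp Z1 \<subseteq> D" "supp Z2 \<subseteq> D" "supp Z3 \<subseteq> D"
    and e: "e \<in> supp Z3" "e \<notin> supp Z1" "e \<notin> supp Z2"
  shows "Z1 = Z2 \<or> Z1 = vneg Z2"
proof (rule ccontr)
  assume neq: "\<not> ?thesis"
  obtain B where B: "B \<subseteq> D" "coindep C B" "card D \<le> card B + 2"
    using D unfolding dual_nullity_le_two_def by blast
  have ne: "supp Z1 \<noteq> supp Z2"
    using cocircuit_supp_subset_eq[OF Z(1,2)] neq by auto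
  define A where "A = supp Z1 \<union> supp Z2"
  have finA: "finite A" and AD: "A \<subseteq> D"
    using finite_supp_cocircuit Z by (auto simp: A_def)
  have "coindep C (supp Z3 \<inter> A)"
    using coindep_inter_cocircuit_supp[OF Z(3)] e unfolding A_def by blast
  then obtain I where I: "supp Z3 \<inter> A \<subseteq> I" "I \<subseteq> A" "coindep C I"
    and maxI: "\<And>x. x \<in> A - I \<Longrightarrow> \<not> coindep C (insert x I)"
    using coindep_extend_maximal[OF finA] by blast
  obtain J where J: "I \<subseteq> J" "J \<subseteq> D" "coindep C J"
    and maxJ: "\<And>x. x \<in> D - J \<Longrightarrow> \<not> coindep C (insert x J)"
    using coindep_extend_maximal[OF finD I(3)] I(2) AD by blast
  have sub: "A - I \<subseteq> D - J"
    using maximal_coindep_extension_inter[OF I(2) maxI J(1,3)] AD by blast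
  have "card B \<le> card J"
    using maximal_coindep_card_ge[OF finD J(2,3) maxJ B(1,2)] .
  then have "card (D - J) \<le> 2"
    using B(3) J(2) finD finite_subset[OF J(2)] by (simp add: card_Diff_subset)
  moreover have "card I + 2 \<le> card A"
    using coindep_card_union_cocircuits[OF Z(1,2) ne] I(2,3) unfolding A_def by blast
  then have "2 \<le> card (A - I)"
    using I(2) finA finite_subset[OF I(2)] by (simp add: card_Diff_subset)
  ultimately have "A - I = D - J"
    using card_subset_eq[OF _ sub] card_mono[OF _ sub] finD by (metis finite_Diff le_antisym order_trans)
  then have "supp Z3 \<subseteq> J"
    using I(1) Z(6) by blast
  with J(3) Z(3) show False
    unfolding coindep_def by blast
qed

lemma dual_rank_attained:
  assumes "finite A"
  obtains B where "B \<subseteq> A" "coindep C B" "card B = dual_rank C A"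
proof -
  let ?S = "{card B | B. B \<subseteq> A \<and> coindep C B}"
  have "?S \<subseteq> card ` Pow A"
    by auto
  then have "finite ?S"
    using assms finite_subset by blast
  moreover have "?S \<noteq> {}"
    using coindep_empty by auto
  ultimately have "dual_rank C A \<in> ?S"
    unfolding dual_rank_def by (rule Max_in)
  then obtain B where "B \<subseteq> A" "coindep C B" "card B = dual_rank C A"
    by auto
  with that show ?thesis .
qed

lemma card_le_dual_rank:
  assumes "finite A" "B \<subseteq> A" "coindep C B"
  shows "card B \<le> dual_rank C A"
proof -
  let ?S = "{card B | B. B \<subseteq> A \<and> coindep C B}"
  have "?S \<subseteq> card ` Pow A"
    by auto
  then have "finite ?S"
    using assms(1) finite_subset by blast
  moreover have "card B \<in> ?S"
    using assms(2,3) by auto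
  ultimately show ?thesis
    unfolding dual_rank_def by (rule Max_ge)
qed

lemma edge_dual_nullity_le_two:
  assumes "is_edge E C W"
  shows "dual_nullity_le_two C (E - zero_set E W)"
proof -
  let ?F = "zero_set E W" and ?D = "E - zero_set E W"
  have FE: "?F \<subseteq> E"
    by (auto simp: zero_set_def)
  have finE: "finite E" and finD: "finite ?D" and finF: "finite ?F"
    using finite_ground FE finite_subset by auto
  obtain BE where BE: "BE \<subseteq> E" "coindep C BE" "card BE = dual_rank C E"
    using dual_rank_attained[OF finE] by blast
  obtain BD where BD: "BD \<subseteq> ?D" "coindep C BD" "card BD = dual_rank C ?D"
    using dual_rank_attained[OF finD] by blast
  have "{card B | B. B \<subseteq> {} \<and> coindep C B} = {0}"
    using coindep_empty by auto
  then have "dual_rank C {} = 0"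
    by (simp add: dual_rank_def)
  \<comment> \<open>Dual rank is subadditive along \<open>E = F \<union> D\<close>.\<close>
  have "card BE \<le> card (BE \<inter> ?D \<union> ?F)"
    using BE(1) finD finF by (intro card_mono) auto
  then have "card BE \<le> card (BE \<inter> ?D) + card ?F"
    using card_Un_le[of "BE \<inter> ?D" ?F] by linarith
  moreover have "card (BE \<inter> ?D) \<le> dual_rank C ?D"
    by (rule card_le_dual_rank[OF finD]) (auto intro: coindep_subset[OF BE(2)])
  moreover have "card BE \<le> card E"
    using card_mono[OF finE BE(1)] .
  moreover have "card E = card ?F + card ?D"
    using card_Un_disjoint[OF finF finD] FE by (simp add: Un_absorb1)
  moreover have "card ?F + dual_rank C ?D - dual_rank C E + 2 = card E + dual_rank C {} - dual_rank C E"
    using assms unfolding is_edge_def om_rank_def mrank_def by simp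
  ultimately have "card ?D = card BD + 2"
    using BE(3) BD(3) \<open>dual_rank C {} = 0\<close> by linarith
  with BD(1,2) show ?thesis
    unfolding dual_nullity_le_two_def by (intro exI[of _ BD]) simp
qed

lemma comodular_dual_nullity_le_two:
  assumes "comodular E C X Y"
  shows "dual_nullity_le_two C (supp X \<union> supp Y)"
proof -
  have "E - zero_set E (comp X Y) = supp X \<union> supp Y"
    using assms supp_cocircuit_subset_ground supp_comp[of X Y]
    by (auto simp: comodular_def zero_set_def supp_def)
  moreover have "is_edge E C (comp X Y)"
    using assms by (simp add: comodular_def)
  ultimately show ?thesis
    using edge_dual_nullity_le_two by metis
qed

lemma comodular_vneg_left:
  assumes "comodular E C X Y"
  shows "comodular E C (vneg X) Y"
proof -
  have X: "X \<in> C" and Y: "Y \<in> C" and edge: "is_edge E C (comp X Y)"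
    and "X \<noteq> Y" "X \<noteq> vneg Y"
    using assms by (auto simp: comodular_def)
  have "comp Y zvec = Y"
    by (auto simp: comp_def zvec_def fun_eq_iff)
  then have "Y \<in> covectors C"
    using covectors.cov_comp[OF Y covectors.cov_zero] by simp
  then have "comp (vneg X) Y \<in> covectors C"
    by (rule covectors.cov_comp[OF vneg_cocircuit[OF X]])
  moreover have "zero_set E (comp (vneg X) Y) = zero_set E (comp X Y)"
    by (auto simp: zero_set_def comp_def)
  ultimately have "is_edge E C (comp (vneg X) Y)"
    using edge by (simp add: is_edge_def)
  moreover have "vneg X \<noteq> Y" "vneg X \<noteq> vneg Y"
    using \<open>X \<noteq> Y\<close> \<open>X \<noteq> vneg Y\<close> by auto
  ultimately show ?thesis
    using vneg_cocircuit[OF X] Y by (simp add: comodular_def)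
qed

lemma comodular_elimination_unique:
  assumes XY: "comodular E C X Y" and e: "e \<in> sep X Y"
    and Z1: "is_elimination C X Y e Z1" and Z2: "is_elimination C X Y e Z2"
  shows "Z1 = Z2"
proof -
  have X: "X \<in> C" and Y: "Y \<in> C"
    using XY by (auto simp: comodular_def)
  have "Z1 = Z2 \<or> Z1 = vneg Z2"
  proof (rule dual_nullity_le_two_cocircuits_eq[of "supp X \<union> supp Y" Z1 Z2 X e])
    show "finite (supp X \<union> supp Y)"
      using X Y finite_supp_cocircuit by blast
    show "dual_nullity_le_two C (supp X \<union> supp Y)"
      using comodular_dual_nullity_le_two[OF XY] .
    show "supp Z1 \<subseteq> supp X \<union> supp Y" "supp Z2 \<subseteq> supp X \<union> supp Y"
      using is_elimination_supp[OF Z1] is_elimination_supp[OF Z2] by auto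
  qed (use X e Z1 Z2 in \<open>auto simp: is_elimination_def sep_def supp_def\<close>)
  \<comment> \<open>If \<open>X \<circ> Y\<close> vanished off \<open>sep X Y\<close>, then \<open>X = -Y\<close>.\<close>
  moreover obtain k where k: "k \<notin> sep X Y" "comp X Y k \<noteq> SZero"
  proof -
    have "X \<noteq> vneg Y"
      using XY by (simp add: comodular_def)
    then obtain k where "X k \<noteq> sneg (Y k)"
      by (auto simp: fun_eq_iff)
    then have "k \<notin> sep X Y" "comp X Y k \<noteq> SZero"
      by (auto simp: sep_def comp_def)
    with that show ?thesis .
  qed
  then have "Z1 \<noteq> vneg Z2"
    using Z1 Z2 sneg_eq_self_iff by (force simp: is_elimination_def)
  ultimately show ?thesis
    by blast
qed

lemma comodular_vanishing_cocircuit_not_supp_subset: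
  assumes XY: "comodular E C X Y" and e: "e \<in> sep X Y" and Z: "Z \<in> C" "Z e = SZero"
  shows "\<not> supp Z \<subseteq> supp X" "\<not> supp Z \<subseteq> supp Y"
proof -
  have "X \<in> C" "Y \<in> C" "Z \<noteq> X" "Z \<noteq> vneg X" "Z \<noteq> Y" "Z \<noteq> vneg Y"
    using XY Z(2) e by (auto simp: comodular_def sep_def)
  then show "\<not> supp Z \<subseteq> supp X" "\<not> supp Z \<subseteq> supp Y"
    using cocircuit_supp_subset_eq[OF Z(1)] by blast+
qed

lemma comodular_conformal_elim_nonzero_where_equal:
  assumes XY: "comodular E C X Y" and e: "e \<in> sep X Y"
    and Z: "Z \<in> C" "Z e = SZero" and conf: "\<And>k. Z k \<noteq> SZero \<Longrightarrow> Z k = X k \<or> Z k = Y k"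
    and k: "X k = Y k" "X k \<noteq> SZero"
  shows "Z k \<noteq> SZero"
proof
  assume Zk: "Z k = SZero"
  have X: "X \<in> C" and Y: "Y \<in> C" and "X \<noteq> Y"
    using XY by (auto simp: comodular_def)
  note not_in = comodular_vanishing_cocircuit_not_supp_subset[OF XY e Z]
  \<comment> \<open>Eliminating \<open>k\<close> between \<open>-X\<close> and \<open>Y\<close> gives a second cocircuit avoiding \<open>k\<close>; comparing it
    with \<open>Z\<close> confines the support of \<open>Z\<close> to that of \<open>X\<close> or of \<open>Y\<close>.\<close>
  have "k \<in> sep (vneg X) Y" "vneg X \<noteq> vneg Y"
    using k \<open>X \<noteq> Y\<close> by (auto simp: sep_def)
  then obtain Z' where Z': "Z' \<in> C" "Z' k = SZero"
    and conf': "\<And>j. Z' j \<noteq> SZero \<Longrightarrow> Z' j = sneg (X j) \<or> Z' j = Y j"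
    using cocircuit_elim_conformal[OF vneg_cocircuit[OF X] Y] by (metis vneg_apply)
  have "supp Z' \<subseteq> supp (vneg X) \<union> supp Y"
    by (rule conformal_supp_subset) (use conf' in simp)
  then have "Z = Z' \<or> Z = vneg Z'"
    using dual_nullity_le_two_cocircuits_eq[OF _ comodular_dual_nullity_le_two[OF XY] Z(1) Z'(1) X
        conformal_supp_subset[OF conf], of k] X Y finite_supp_cocircuit k Zk Z'(2)
    by (auto simp: supp_def)
  then show False
  proof
    assume "Z = Z'"
    then have "supp Z \<subseteq> supp Y"
      using conf conf' by (intro conformal_both_signs_supp_subset[of Z X Y]) auto
    with not_in(2) show False ..
  next
    assume "Z = vneg Z'"
    then have "Z j = sneg (Y j) \<or> Z j = X j" if "Z j \<noteq> SZero" for j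
      using conf'[of j] that by (cases "Z' j"; cases "X j"; cases "Y j") auto
    then have "supp Z \<subseteq> supp X"
      using conf by (intro conformal_both_signs_supp_subset[of Z Y X]) blast+
    with not_in(1) show False ..
  qed
qed

lemma comodular_conformal_elim_nonzero:
  assumes XY: "comodular E C X Y" and e: "e \<in> sep X Y"
    and Z: "Z \<in> C" "Z e = SZero" and conf: "\<And>k. Z k \<noteq> SZero \<Longrightarrow> Z k = X k \<or> Z k = Y k"
    and k: "k \<in> supp X \<union> supp Y" "k \<notin> sep X Y"
  shows "Z k \<noteq> SZero"
proof
  assume Zk: "Z k = SZero"
  let ?N = "supp X \<union> supp Y"
  have X: "X \<in> C" and Y: "Y \<in> C"
    using XY by (auto simp: comodular_def)
  have finN: "finite ?N"
    using X Y finite_supp_cocircuit by blast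
  have N: "dual_nullity_le_two C ?N"
    using comodular_dual_nullity_le_two[OF XY] .
  note not_in = comodular_vanishing_cocircuit_not_supp_subset[OF XY e Z]
  have ZN: "supp Z \<subseteq> ?N"
    using conformal_supp_subset[OF conf] .
  consider "X k = SZero" | "Y k = SZero" | "X k = Y k" "X k \<noteq> SZero"
    using k(2) by (cases "X k"; cases "Y k") (auto simp: sep_def)
  then show False
  proof cases
    case 1
    then have "Z = X \<or> Z = vneg X"
      using dual_nullity_le_two_cocircuits_eq[OF finN N Z(1) X Y ZN _ _, of k] k(1) Zk
      by (auto simp: supp_def)
    with not_in(1) show False
      by (metis order_refl supp_vneg)
  next
    case 2
    then have "Z = Y \<or> Z = vneg Y"
      using dual_nullity_le_two_cocircuits_eq[OF finN N Z(1) Y X ZN _ _, of k] k(1) Zk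
      by (auto simp: supp_def)
    with not_in(2) show False
      by (metis order_refl supp_vneg)
  next
    case 3
    with comodular_conformal_elim_nonzero_where_equal[OF XY e Z conf] Zk show False
      by blast
  qed
qed

lemma comodular_elimination_exists:
  assumes XY: "comodular E C X Y" and e: "e \<in> sep X Y"
  obtains Z where "is_elimination C X Y e Z"
proof -
  have "X \<in> C" "Y \<in> C" "X \<noteq> vneg Y"
    using XY by (auto simp: comodular_def)
  then obtain Z where Z: "Z \<in> C" "Z e = SZero" and conf: "\<And>k. Z k \<noteq> SZero \<Longrightarrow> Z k = X k \<or> Z k = Y k"
    using cocircuit_elim_conformal e by metis
  have "Z k = comp X Y k" if k: "k \<notin> sep X Y" for k
  proof (cases "k \<in> supp X \<union> supp Y")
    case True
    then have "Z k \<noteq> SZero"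
      using comodular_conformal_elim_nonzero[OF XY e Z conf _ k] by blast
    then show ?thesis
      using conf[of k] k by (cases "X k"; cases "Y k") (auto simp: comp_def sep_def)
  next
    case False
    then show ?thesis
      using conf[of k] by (auto simp: comp_def supp_def)
  qed
  with Z that show ?thesis
    unfolding is_elimination_def by blast
qed

lemma comodular_elim_eq:
  assumes "comodular E C X Y" "e \<in> sep X Y" "is_elimination C X Y e Z"
  shows "elim C X Y e = Z"
  unfolding elim_eq_The_is_elimination
  using assms comodular_elimination_unique by blast

end

theorem proposition2p4:
  fixes E :: "'a set" and C :: "'a svec set" and f g h :: 'a and X Y :: "'a svec"
  assumes "om_cocircuits E C"
    and "f \<in> E" and "g \<in> E" and "h \<in> E"
    and "f \<noteq> g" and "g \<noteq> h" and "f \<noteq> h"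
    and "comodular E C X Y"
    and "X g = Y g" and "X g \<noteq> SZero"
    and "X f = Y f" and "X f \<noteq> SZero"
    and "arr_both E C g f X Y"
  shows "arr_right E C g h X Y \<longrightarrow> arr_right E C f h X Y"
proof
  assume right: "arr_right E C g h X Y"
  have XY: "comodular E C (vneg X) Y"
    using comodular_vneg_left[OF assms(1,8)] .
  have sep: "g \<in> sep (vneg X) Y" "f \<in> sep (vneg X) Y"
    using assms(9-12) by (auto simp: sep_def)
  obtain Z where Z: "is_elimination C (vneg X) Y g Z"
    using comodular_elimination_exists[OF assms(1) XY sep(1)] .
  then have elim_g: "elim C (vneg X) Y g = Z"
    by (rule comodular_elim_eq[OF assms(1) XY sep(1)])
  have "Z f = SZero"
    using assms(13) elim_g by (simp add: arr_both_def)
  with Z have "is_elimination C (vneg X) Y f Z"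
    by (simp add: is_elimination_def)
  then have "elim C (vneg X) Y f = Z"
    by (rule comodular_elim_eq[OF assms(1) XY sep(2)])
  with elim_g right show "arr_right E C f h X Y"
    using assms(2,4,7,8,11,12) by (simp add: arr_right_def arrow_setting_def)
qed

end
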